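(* Let $m$ be a positive integer and $c\in\mathbb{F}_{2^m}^*$. Then the polynomial \[ g(x)=x^{2^{m}(2^{2m}+1)}+x^{2^{2m}+1}+cx \] is a permutation polynomial of $\mathbb{F}_{2^{3m}}$.
   Context: A polynomial $f\in\mathbb{F}_Q[x]$ is a permutation polynomial of $\mathbb{F}_Q$ if the map $c\mapsto f(c)$ is a bijection of $\mathbb{F}_Q$. $\mathbb{F}_{2^m}$ is viewed as the subfield of $\mathbb{F}_{2^{3m}}$. *)

theory Defs
  imports "HOL-Computational_Algebra.Polynomial"
begin

definition permutation_polynomial :: "'a::field poly \<Rightarrow> bool" where
  "permutation_polynomial f \<longleftrightarrow> bij (poly f)"

definition is_subfield :: "'a::field set \<Rightarrow> bool" where
  "is_subfield K \<longleftrightarrow> 0 \<in> K \<and> 1 \<in> K \<and>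
     (\<forall>x\<in>K. \<forall>y\<in>K. x + y \<in> K \<and> x * y \<in> K) \<and>
     (\<forall>x\<in>K. - x \<in> K \<and> inverse x \<in> K)"

end

theory Submission
  imports Defs "HOL-Computational_Algebra.Primes" "HOL-Number_Theory.Residues"
begin

text \<open>
  Put \<open>q = 2^m\<close> and \<open>F x = x^q\<close>, an automorphism of order three of the field with
  \<open>q\<^sup>3\<close> elements that fixes \<open>c\<close>. Then \<open>g x = x (F x + F (F x) + c) = x\<^sup>2 + (T x + c) x\<close>,
  where \<open>T x = x + F x + F (F x)\<close> is the trace to the subfield with \<open>q\<close> elements. Applying the
  additive map \<open>T\<close> gives \<open>T (g x) = c T x\<close>, so \<open>g x = g y\<close> forces \<open>T x = T y\<close>. With
  \<open>s = T x + c\<close>, which is fixed by \<open>F\<close>, the equation \<open>x\<^sup>2 + s x = y\<^sup>2 + s y\<close> factors as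
  \<open>(x + y)(x + y + s) = 0\<close>, and \<open>y = x + s\<close> would give \<open>T y = T x + s\<close>, i.e. \<open>s = 0\<close>.
\<close>

(* Residues drags in HOL-Algebra, whose UnivPoly.monom would shadow Polynomial.monom. *)
hide_const (open) UnivPoly.monom

lemma CHAR_eq_2_if_card_eq_power_2:
  assumes "card (UNIV :: 'a::{field,finite} set) = 2 ^ k"
  shows "CHAR('a) = 2"
proof -
  have "prime CHAR('a)"
    by (rule prime_CHAR_semidom) (simp add: finite_imp_CHAR_pos)
  moreover have "CHAR('a) dvd 2 ^ k"
    using CHAR_dvd_CARD assms by metis
  ultimately show ?thesis
    by (metis prime_dvd_power primes_dvd_imp_eq two_is_prime_nat)
qed

lemma power_card_eq_one_if_mult_closed:
  fixes S :: "'a::field set"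
  assumes "finite S" "0 \<notin> S" "c \<in> S" "\<And>y. y \<in> S \<Longrightarrow> c * y \<in> S"
  shows "c ^ card S = 1"
proof -
  have inj: "inj_on ((*) c) S"
    using assms(2,3) by (auto simp: inj_on_def)
  have "(*) c ` S = S"
    using assms(1,4) card_image[OF inj] by (simp add: card_subset_eq image_subset_iff)
  then have "\<Prod>S = c ^ card S * \<Prod>S"
    using prod.reindex[OF inj, of id] by (simp add: prod.distrib)
  moreover have "\<Prod>S \<noteq> 0"
    using assms(1,2) by (metis prod_zero_iff)
  ultimately show ?thesis
    by simp
qed

lemma power_card_eq_same_if_mult_closed:
  fixes K :: "'a::field set"
  assumes "finite K" "0 \<in> K" "c \<in> K" "\<And>x y. x \<in> K \<Longrightarrow> y \<in> K \<Longrightarrow> x * y \<in> K"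
  shows "c ^ card K = c"
proof (cases "c = 0")
  case True
  then show ?thesis
    using assms(1,2) by (auto simp: card_gt_0_iff)
next
  case False
  have "c * y \<in> K - {0}" if "y \<in> K - {0}" for y
    using that False assms(3,4) by simp
  then have "c ^ card (K - {0}) = 1"
    using power_card_eq_one_if_mult_closed[of "K - {0}" c] assms(1,3) False by simp
  moreover have "card K = Suc (card (K - {0}))"
    using card_Suc_Diff1[OF assms(1,2)] by simp
  ultimately show ?thesis
    by simp
qed

lemma power_card_UNIV_eq_same:
  fixes x :: "'a::{field,finite}"
  shows "x ^ card (UNIV :: 'a set) = x"
  by (rule power_card_eq_same_if_mult_closed) simp_all

locale char2_order3_automorphism =
  fixes F :: "'a::field \<Rightarrow> 'a"
  assumes char2: "CHAR('a) = 2"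
    and F_add: "F (x + y) = F x + F y"
    and F_mult: "F (x * y) = F x * F y"
    and F_F_F: "F (F (F x)) = x"
begin

lemma add_self: "x + x = (0::'a)"
  using uminus_CHAR_2[OF char2] by (metis add.right_inverse)

lemma square_add: "(x + y) ^ 2 = x ^ 2 + (y::'a) ^ 2"
  by (rule freshmans_dream) (use char2 in auto)

definition trace :: "'a \<Rightarrow> 'a" where
  "trace x = x + F x + F (F x)"

lemma trace_add: "trace (x + y) = trace x + trace y"
  unfolding trace_def F_add by (simp add: algebra_simps)

lemma F_trace: "F (trace x) = trace x"
  unfolding trace_def F_add F_F_F by (simp add: algebra_simps)

lemma trace_square: "trace (x ^ 2) = trace x ^ 2"
  unfolding trace_def square_add by (simp add: F_mult power2_eq_square)

lemma trace_mult_fixed: "F s = s \<Longrightarrow> trace (s * x) = s * trace x"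
  unfolding trace_def F_mult by (simp add: algebra_simps)

lemma trace_fixed: "F s = s \<Longrightarrow> trace s = s"
  unfolding trace_def by (simp add: add_self)

lemma map_eq_quadratic: "x * (F x + F (F x) + c) = x ^ 2 + (trace x + c) * x"
proof -
  have "x ^ 2 + (trace x + c) * x = x * (F x + F (F x) + c) + (x * x + x * x)"
    unfolding trace_def by (simp add: algebra_simps power2_eq_square)
  then show ?thesis
    by (simp add: add_self)
qed

lemma trace_map:
  assumes "F c = c"
  shows "trace (x * (F x + F (F x) + c)) = c * trace x"
proof -
  have fixed: "F (trace x + c) = trace x + c"
    using F_add F_trace assms by simp
  have "trace (x * (F x + F (F x) + c)) = trace x ^ 2 + (trace x + c) * trace x"
    unfolding map_eq_quadratic trace_add trace_square trace_mult_fixed[OF fixed] ..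
  also have "\<dots> = c * trace x + (trace x * trace x + trace x * trace x)"
    by (simp add: algebra_simps power2_eq_square)
  finally show ?thesis
    by (simp add: add_self)
qed

theorem inj_map:
  assumes "F c = c" "c \<noteq> 0"
  shows "inj (\<lambda>x. x * (F x + F (F x) + c))"
proof (rule injI)
  fix x y
  assume eq: "x * (F x + F (F x) + c) = y * (F y + F (F y) + c)"
  then have "c * trace x = c * trace y"
    using trace_map[OF assms(1)] by metis
  then have same_trace: "trace x = trace y"
    using assms(2) by simp
  define s where "s = trace x + c"
  have s_fixed: "F s = s"
    unfolding s_def using F_add F_trace assms(1) by simp
  have "x ^ 2 + s * x = y ^ 2 + s * y"
    using eq same_trace unfolding map_eq_quadratic s_def by simp
  moreover have "(x + y) * (x + y + s) = (x ^ 2 + s * x) + (y ^ 2 + s * y) + (x * y + x * y)"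
    by (simp add: algebra_simps power2_eq_square)
  ultimately have "(x + y) * (x + y + s) = 0"
    by (simp add: add_self)
  then have "x = y \<or> y = x + s"
    using add_eq_0_iff uminus_CHAR_2[OF char2] by (metis mult_eq_0_iff add.assoc add.commute)
  moreover have "s = 0" if "y = x + s"
  proof -
    have "trace y = trace x + s"
      using that trace_add trace_fixed[OF s_fixed] by simp
    then show "s = 0"
      using same_trace by simp
  qed
  ultimately show "x = y"
    by auto
qed

end

theorem corollary1:
  fixes m :: nat and c :: "'a::{field,finite}" and K :: "'a set"
  assumes "m > 0"
    and "card (UNIV :: 'a set) = 2 ^ (3 * m)"
    and "is_subfield K" and "card K = 2 ^ m"
    and "c \<in> K" and "c \<noteq> 0"
  shows "permutation_polynomial
           (monom 1 (2 ^ m * (2 ^ (2 * m) + 1)) + monom 1 (2 ^ (2 * m) + 1) + monom c 1)"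
proof -
  define q :: nat where "q = 2 ^ m"
  have char2: "CHAR('a) = 2"
    using CHAR_eq_2_if_card_eq_power_2 assms(2) .
  have card_UNIV: "card (UNIV :: 'a set) = q * q * q"
    unfolding q_def assms(2) by (simp flip: power_add power_mult)
  interpret char2_order3_automorphism "\<lambda>x::'a. x ^ q"
  proof
    show "(x + y) ^ q = x ^ q + y ^ q" for x y :: 'a
      by (rule freshmans_dream') (use char2 in \<open>auto simp: q_def\<close>)
    show "((x ^ q) ^ q) ^ q = x" for x :: 'a
      using power_card_UNIV_eq_same[of x] by (simp add: card_UNIV power_mult mult.assoc)
  qed (simp_all add: char2 power_mult_distrib)
  have "c ^ q = c"
    using power_card_eq_same_if_mult_closed[of K c] assms(3-5)
    unfolding is_subfield_def q_def by simp
  then have "inj (\<lambda>x. x * (x ^ q + (x ^ q) ^ q + c))"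
    using inj_map assms(6) by simp
  moreover have "poly (monom 1 (2 ^ m * (2 ^ (2 * m) + 1)) + monom 1 (2 ^ (2 * m) + 1) + monom c 1) x
      = x * (x ^ q + (x ^ q) ^ q + c)" for x :: 'a
  proof -
    have "2 ^ m * (2 ^ (2 * m) + 1) = q * q * q + q" "2 ^ (2 * m) + 1 = q * q + 1"
      unfolding q_def by (simp_all add: algebra_simps flip: power_add power_mult)
    then show ?thesis
      using power_card_UNIV_eq_same[of x]
      by (simp add: poly_monom card_UNIV power_add power_mult algebra_simps)
  qed
  ultimately show ?thesis
    unfolding permutation_polynomial_def
    by (metis (no_types, lifting) finite_UNIV_inj_surj finite_class.finite_UNIV inj_on_cong bij_def)
qed

end
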